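(* Let $N_{\mathsf s}\ge1$ be an integer and $\beta>0$, and for $\gamma>0$ define \[ I(\gamma):=\beta\sum_{k\ge0}\frac{(N_{\mathsf s}^2\beta)^k}{k!}e^{-N_{\mathsf s}^2\beta}\log_2\!\Big(1+\frac{\gamma}{1+\frac{k}{N_{\mathsf s}^2}\gamma}\Big). \] Then its high-SNR slope is \[ \mathcal S_\infty:=\lim_{\gamma\to\infty}\gamma\,\ln 2\,\frac{dI}{d\gamma}(\gamma)=\beta e^{-N_{\mathsf s}^2\beta}. \]
   Context: $I(\gamma)$ is the large-system mutual information (bits/s/Hz) of time-hopping CDMA with $N_{\mathsf s}$ pulses per symbol, Gaussian inputs, and a bank of single-user matched filters followed by independent decoders knowing the spreading matrix. *)

theory Defs
  imports "HOL-Analysis.Analysis"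
begin

definition thcdma_MI :: "nat \<Rightarrow> real \<Rightarrow> real \<Rightarrow> real" where
  "thcdma_MI Ns \<beta> \<gamma> =
     \<beta> * (\<Sum>k. ((real Ns ^ 2 * \<beta>) ^ k / fact k) * exp (- (real Ns ^ 2 * \<beta>))
             * log 2 (1 + \<gamma> / (1 + (real k / real Ns ^ 2) * \<gamma>)))"

end

theory Submission
  imports Defs "HOL-Real_Asymp.Real_Asymp"
begin

text \<open>Write \<open>I = \<beta> \<Sum>\<^sub>k p\<^sub>k log\<^sub>2(1 + \<gamma>/(1 + a\<^sub>k\<gamma>))\<close> with Poisson weights \<open>p\<^sub>k\<close> and loads
  \<open>a\<^sub>k = k/N\<^sub>s\<^sup>2\<close>. Term by term, \<open>\<gamma> ln 2\<close> times the derivative is \<open>p\<^sub>k \<gamma>/((1 + a\<^sub>k\<gamma>)(1 + (a\<^sub>k+1)\<gamma>))\<close>: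
  the interference-free term \<open>k = 0\<close> tends to \<open>p\<^sub>0\<close>, while every other term is at most
  \<open>p\<^sub>k N\<^sub>s\<^sup>2/\<gamma>\<close>, so the tail vanishes. Differentiating under the sum is justified by the
  Weierstrass M-test, since all termwise derivatives are bounded by \<open>p\<^sub>k / ln 2\<close>.\<close>

definition mf_rate :: "real \<Rightarrow> real \<Rightarrow> real" where
  "mf_rate a \<gamma> = log 2 (1 + \<gamma> / (1 + a * \<gamma>))"

lemma has_real_derivative_mf_rate:
  fixes a x :: real
  assumes "a \<ge> 0" "x > 0"
  shows "(mf_rate a has_real_derivative 1 / ((1 + a*x) * (1 + (a+1)*x) * ln 2)) (at x)"
proof -
  have pos: "1 + a*x > 0" using assms by (simp add: add_pos_nonneg)
  have "1 + x / (1 + a*x) > 0" using assms pos by (simp add: add_pos_nonneg)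
  then have "(mf_rate a has_real_derivative
      1 / ((1 + a*x) * (1 + a*x)) / (ln 2 * (1 + x / (1 + a*x)))) (at x)"
    unfolding mf_rate_def[abs_def] using pos by (intro derivative_eq_intros refl) auto
  moreover have "1 / ((1 + a*x) * (1 + a*x)) / (ln 2 * (1 + x / (1 + a*x)))
      = 1 / ((1 + a*x) * (1 + (a+1)*x) * ln 2)"
  proof -
    have "1 + x / (1 + a*x) = (1 + (a+1)*x) / (1 + a*x)"
      using pos by (simp add: field_simps)
    moreover have "1 / (u * u) / (l * (v / u)) = 1 / (u * v * l)" if "u \<noteq> 0" for u v l :: real
      using that by (simp add: field_simps)
    ultimately show ?thesis using pos by (simp only:)
  qed
  ultimately show ?thesis by (simp only:)
qed

lemma mf_rate_bounds:
  fixes a x :: real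
  assumes "a \<ge> 0" "x \<ge> 0"
  shows "0 \<le> mf_rate a x" "mf_rate a x \<le> log 2 (1 + x)"
proof -
  have "1 \<le> 1 + a*x" using assms by simp
  then have "x / (1 + a*x) \<le> x / 1"
    using assms by (intro divide_left_mono) (auto simp: add_pos_nonneg)
  moreover have "0 \<le> x / (1 + a*x)"
    using assms by simp
  ultimately show "0 \<le> mf_rate a x" "mf_rate a x \<le> log 2 (1 + x)"
    unfolding mf_rate_def by (auto simp: add_pos_nonneg)
qed

lemma mf_rate_deriv_bounds:
  fixes a x :: real
  assumes "a \<ge> 0" "x \<ge> 0"
  shows "0 \<le> 1 / ((1 + a*x) * (1 + (a+1)*x) * ln 2)"
    "1 / ((1 + a*x) * (1 + (a+1)*x) * ln 2) \<le> 1 / ln 2"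
proof -
  have "(1 + a*x) * (1 + (a+1)*x) \<ge> 1" using assms by (simp add: mult_ge1_I)
  then show "0 \<le> 1 / ((1 + a*x) * (1 + (a+1)*x) * ln 2)"
    "1 / ((1 + a*x) * (1 + (a+1)*x) * ln 2) \<le> 1 / ln 2"
    by (auto simp: divide_le_eq)
qed

lemma mf_slope_bounds:
  fixes a x :: real
  assumes "a > 0" "x > 0"
  shows "0 \<le> x / ((1 + a*x) * (1 + (a+1)*x))" "x / ((1 + a*x) * (1 + (a+1)*x)) \<le> 1 / (a*x)"
proof -
  have "a*x * x \<le> (1 + a*x) * (1 + (a+1)*x)"
    using assms by (intro mult_mono) (auto simp: algebra_simps)
  moreover have "0 < a*x * x" using assms by simp
  ultimately have "x / ((1 + a*x) * (1 + (a+1)*x)) \<le> x / (a*x * x)"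
    using assms by (intro divide_left_mono mult_pos_pos) (auto simp: add_pos_nonneg)
  also have "\<dots> = 1 / (a*x)" using assms by simp
  finally show "x / ((1 + a*x) * (1 + (a+1)*x)) \<le> 1 / (a*x)" .
  show "0 \<le> x / ((1 + a*x) * (1 + (a+1)*x))"
    using assms by (simp add: add_pos_nonneg)
qed

lemma has_real_derivative_mf_rate_mixture:
  fixes p a :: "nat \<Rightarrow> real" and x :: real
  assumes "summable p" "\<And>k. p k \<ge> 0" "\<And>k. a k \<ge> 0" "x > 0"
  shows "((\<lambda>\<gamma>. \<Sum>k. p k * mf_rate (a k) \<gamma>) has_real_derivative
           (\<Sum>k. p k / ((1 + a k * x) * (1 + (a k + 1) * x) * ln 2))) (at x)"
proof -
  define D where "D k y = p k / ((1 + a k * y) * (1 + (a k + 1) * y) * ln 2)" for k y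
  have term_deriv: "((\<lambda>\<gamma>. p k * mf_rate (a k) \<gamma>) has_real_derivative D k y) (at y within {0<..})"
    if "y \<in> {0<..}" for k y
    using DERIV_cmult[OF has_real_derivative_mf_rate[OF assms(3)], of y "p k"] that
    by (auto simp: D_def intro: has_field_derivative_at_within)
  have "norm (D k y) \<le> p k / ln 2" if "y \<in> {0<..}" for k y
  proof -
    note bounds = mf_rate_deriv_bounds[OF assms(3), of y k]
    have "norm (D k y) = p k * (1 / ((1 + a k * y) * (1 + (a k + 1) * y) * ln 2))"
      using bounds assms(2)[of k] that by (simp add: D_def)
    also have "\<dots> \<le> p k * (1 / ln 2)"
      using bounds that assms(2)[of k] by (intro mult_left_mono) auto
    finally show ?thesis by simp
  qed
  then have unif: "uniformly_convergent_on {0<..} (\<lambda>n y. \<Sum>k<n. D k y)"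
    by (rule Weierstrass_m_test') (auto intro: summable_divide assms(1))
  moreover have summable_at_1: "summable (\<lambda>k. p k * mf_rate (a k) 1)"
  proof (rule summable_comparison_test'[OF summable_mult2[OF assms(1), of "log 2 2"]])
    show "norm (p k * mf_rate (a k) 1) \<le> p k * log 2 2" for k
      using mf_rate_bounds[OF assms(3), of 1 k] assms(2)[of k] by (simp add: mult_left_le mult.commute)
  qed
  moreover have "x \<in> interior {0<..}" using assms(4) by (simp add: interior_open)
  ultimately show ?thesis
    using has_field_derivative_series'(2)[OF convex_real_interval(3) term_deriv unif _ summable_at_1]
    by (simp add: D_def)
qed

lemma mf_rate_mixture_slope_tendsto:
  fixes p a :: "nat \<Rightarrow> real" and \<delta> :: real
  assumes "summable p" "\<And>k. p k \<ge> 0" "a 0 = 0" "\<delta> > 0" "\<And>k. k > 0 \<Longrightarrow> a k \<ge> \<delta>"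
  shows "((\<lambda>x. x * ln 2 * (\<Sum>k. p k / ((1 + a k * x) * (1 + (a k + 1) * x) * ln 2))) \<longlongrightarrow> p 0)
           at_top"
proof -
  define s where "s k x = p k * (x / ((1 + a k * x) * (1 + (a k + 1) * x)))" for k x
  define P where "P = (\<Sum>k. p (Suc k))"
  have a_pos: "a (Suc k) > 0" for k using assms(4) assms(5)[of "Suc k"] by simp
  have s_bounds: "0 \<le> s (Suc k) x" "s (Suc k) x \<le> p (Suc k) * (1 / (\<delta> * x))" if "x > 0" for k x
  proof -
    note slope = mf_slope_bounds[OF a_pos[of k] that]
    have "1 / (a (Suc k) * x) \<le> 1 / (\<delta> * x)"
      using assms(4) assms(5)[of "Suc k"] that by (intro divide_left_mono mult_right_mono) auto
    with slope(2) have "x / ((1 + a (Suc k) * x) * (1 + (a (Suc k) + 1) * x)) \<le> 1 / (\<delta> * x)"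
      by (rule order_trans)
    then show "s (Suc k) x \<le> p (Suc k) * (1 / (\<delta> * x))"
      unfolding s_def using assms(2) by (rule mult_left_mono)
    show "0 \<le> s (Suc k) x"
      unfolding s_def using assms(2) slope(1) by (rule mult_nonneg_nonneg)
  qed
  have summable_p_Suc: "summable (\<lambda>k. p (Suc k))"
    using assms(1) by (simp add: summable_Suc_iff)
  have summable_majorant: "summable (\<lambda>k. p (Suc k) * (1 / (\<delta> * x)))" for x
    using summable_p_Suc by (rule summable_mult2)
  have summable_tail: "summable (\<lambda>k. s (Suc k) x)" if "x > 0" for x
    using summable_majorant[of x] by (rule summable_comparison_test')
       (use s_bounds[OF that] in \<open>simp add: abs_of_nonneg\<close>)
  have tail_bounds: "0 \<le> (\<Sum>k. s (Suc k) x)" "(\<Sum>k. s (Suc k) x) \<le> P * (1 / (\<delta> * x))"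
    if "x > 0" for x
  proof -
    show "0 \<le> (\<Sum>k. s (Suc k) x)"
      using summable_tail[OF that] by (rule suminf_nonneg) (rule s_bounds[OF that])
    have "(\<Sum>k. s (Suc k) x) \<le> (\<Sum>k. p (Suc k) * (1 / (\<delta> * x)))"
      using summable_tail[OF that] summable_majorant[of x] by (rule suminf_le[rotated]) (rule s_bounds[OF that])
    also have "\<dots> = P * (1 / (\<delta> * x))"
      unfolding P_def using summable_p_Suc by (rule suminf_mult2[symmetric])
    finally show "(\<Sum>k. s (Suc k) x) \<le> P * (1 / (\<delta> * x))" .
  qed
  have split_head: "x * ln 2 * (\<Sum>k. p k / ((1 + a k * x) * (1 + (a k + 1) * x) * ln 2))
          = p 0 * (x / (1 + x)) + (\<Sum>k. s (Suc k) x)" if "x > 0" for x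
  proof -
    have summable_s: "summable (\<lambda>k. s k x)"
      using summable_tail[OF that] summable_Suc_iff[of "\<lambda>k. s k x"] by simp
    have "p k / ((1 + a k * x) * (1 + (a k + 1) * x) * ln 2) = s k x / (x * ln 2)" for k
      using that by (simp add: s_def)
    then have "x * ln 2 * (\<Sum>k. p k / ((1 + a k * x) * (1 + (a k + 1) * x) * ln 2))
                 = (\<Sum>k. s k x)"
      using that suminf_divide[OF summable_s, of "x * ln 2"] by simp
    also have "\<dots> = p 0 * (x / (1 + x)) + (\<Sum>k. s (Suc k) x)"
      using suminf_split_head[OF summable_s] assms(3) by (simp add: s_def)
    finally show ?thesis .
  qed
  have eventually_eq: "\<forall>\<^sub>F x in at_top. p 0 * (x / (1 + x)) + (\<Sum>k. s (Suc k) x)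
      = x * ln 2 * (\<Sum>k. p k / ((1 + a k * x) * (1 + (a k + 1) * x) * ln 2))"
    using eventually_gt_at_top[of 0] by eventually_elim (simp add: split_head)
  have "((\<lambda>x. \<Sum>k. s (Suc k) x) \<longlongrightarrow> 0) at_top"
  proof (rule tendsto_sandwich[of "\<lambda>_. 0" _ _ "\<lambda>x. P * (1 / (\<delta> * x))"])
    show "\<forall>\<^sub>F x in at_top. 0 \<le> (\<Sum>k. s (Suc k) x)"
      using eventually_gt_at_top[of 0] by eventually_elim (rule tail_bounds)
    show "\<forall>\<^sub>F x in at_top. (\<Sum>k. s (Suc k) x) \<le> P * (1 / (\<delta> * x))"
      using eventually_gt_at_top[of 0] by eventually_elim (rule tail_bounds)
    show "((\<lambda>x. P * (1 / (\<delta> * x))) \<longlongrightarrow> 0) at_top"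
      using assms(4) by real_asymp
  qed simp
  moreover have "((\<lambda>x::real. x / (1 + x)) \<longlongrightarrow> 1) at_top" by real_asymp
  ultimately have "((\<lambda>x. p 0 * (x / (1 + x)) + (\<Sum>k. s (Suc k) x)) \<longlongrightarrow> p 0 * 1 + 0) at_top"
    by (intro tendsto_intros)
  then show ?thesis
    using eventually_eq by (simp add: Lim_transform_eventually)
qed

theorem corollary3:
  fixes Ns :: nat and \<beta> :: real
  assumes "Ns \<ge> 1" and "\<beta> > 0"
  shows "((\<lambda>\<gamma>. \<gamma> * ln 2 * deriv (thcdma_MI Ns \<beta>) \<gamma>)
            \<longlongrightarrow> \<beta> * exp (- (real Ns ^ 2 * \<beta>))) at_top"
proof -
  define c where "c = real Ns ^ 2 * \<beta>"
  define p where "p k = c ^ k / fact k * exp (- c)" for k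
  define a where "a k = real k / real Ns ^ 2" for k
  define D where "D x = (\<Sum>k. p k / ((1 + a k * x) * (1 + (a k + 1) * x) * ln 2))" for x
  have p_nonneg: "p k \<ge> 0" for k using assms(2) by (simp add: p_def c_def)
  have summable_p: "summable p"
    unfolding p_def using summable_exp[of c]
    by (intro summable_mult2) (simp add: divide_inverse mult.commute)
  have a_nonneg: "a k \<ge> 0" for k by (simp add: a_def)
  have a_ge: "a k \<ge> 1 / real Ns ^ 2" if "k > 0" for k
    using that by (simp add: a_def divide_right_mono)
  have MI: "thcdma_MI Ns \<beta> = (\<lambda>\<gamma>. \<beta> * (\<Sum>k. p k * mf_rate (a k) \<gamma>))"
    by (simp add: fun_eq_iff thcdma_MI_def mf_rate_def p_def a_def c_def)
  have deriv_MI: "deriv (thcdma_MI Ns \<beta>) x = \<beta> * D x" if "x > 0" for x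
    unfolding MI D_def
    by (intro DERIV_imp_deriv DERIV_cmult
          has_real_derivative_mf_rate_mixture[OF summable_p p_nonneg a_nonneg that])
  have "((\<lambda>x. x * ln 2 * D x) \<longlongrightarrow> p 0) at_top"
    unfolding D_def using assms(1)
    by (intro mf_rate_mixture_slope_tendsto[OF summable_p p_nonneg _ _ a_ge]) (auto simp: a_def)
  then have "((\<lambda>x. \<beta> * (x * ln 2 * D x)) \<longlongrightarrow> \<beta> * p 0) at_top"
    by (rule tendsto_mult_left)
  moreover have "\<forall>\<^sub>F x in at_top. \<beta> * (x * ln 2 * D x) = x * ln 2 * deriv (thcdma_MI Ns \<beta>) x"
    using eventually_gt_at_top[of 0] by eventually_elim (simp add: deriv_MI)
  ultimately show ?thesis
    by (simp add: Lim_transform_eventually p_def c_def)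
qed

end
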